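(* Let $\mathbf C$ be a clone $\tau$-algebra. Then: (i) $\mathrm{Fi}\,\mathbf C$ is a subalgebra of $\mathbf C$; (ii) for each $k$, $\mathrm{Fi}_k\,\mathbf C$ is a subuniverse of the $\tau$-reduct $\mathbf C_\tau$, closed under all operations $q_n$ ($n\ge0$), and containing $\mathsf e_1,\dots,\mathsf e_k$; (iii) if $a\in\mathrm{Fi}_0\,\mathbf C$ and $b_1,\dots,b_n\in C$, then $q_n(a,b_1,\dots,b_n)=a$; (iv) if $a\in\mathrm{Fi}\,\mathbf C$, $n\ge\gamma(a)$ and $b_1,\dots,b_n\in\mathrm{Fi}_0\,\mathbf C$, then $q_n(a,b_1,\dots,b_n)\in\mathrm{Fi}_0\,\mathbf C$.
   Context: A clone $\tau$-algebra is an algebra $\mathbf C=(C,\sigma^{\mathbf C}\ (\sigma\in\tau),q_n^{\mathbf C}\ (n\ge0),\mathsf e_i^{\mathbf C}\ (i\ge1))$ with $\mathsf e_i$ nullary, $q_n$ of arity $n+1$, satisfying: (C1) $q_n(\mathsf e_i,x_1,\dots,x_n)=x_i$ ($1\le i\le n$); (C2) $q_n(\mathsf e_j,x_1,\dots,x_n)=\mathsf e_j$ ($j>n$); (C3) $q_n(x,\mathsf e_1,\dots,\mathsf e_n)=x$; (C4) $q_k(x,y_1,\dots,y_k)=q_n(x,y_1,\dots,y_k,\mathsf e_{k+1},\dots,\mathsf e_n)$ ($n>k$); (C5) $q_n(q_n(x,\mathbf y),\mathbf z)=q_n(x,q_n(y_1,\mathbf z),\dots,q_n(y_n,\mathbf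 z))$; (C6) $q_n(\sigma(x_1,\dots,x_k),\mathbf y)=\sigma(q_n(x_1,\mathbf y),\dots,q_n(x_k,\mathbf y))$ for $\sigma\in\tau$ of arity $k$. An element $a$ is independent of $\mathsf e_n$ if $q_n(a,\mathsf e_1,\dots,\mathsf e_{n-1},\mathsf e_{n+1})=a$, dependent otherwise; $\gamma(a)$ is $\omega$ if $a$ depends on infinitely many $\mathsf e_i$, $0$ if on none, otherwise the largest $i$ with $a$ dependent on $\mathsf e_i$. $\mathrm{Fi}_k\,\mathbf C=\{a\in C:\gamma(a)\le k\}$ and $\mathrm{Fi}\,\mathbf C=\bigcup_{k<\omega}\mathrm{Fi}_k\,\mathbf C$. *)

theory Defs
  imports Main "HOL-Library.Extended_Nat"
begin

text \<open>Operation symbols of tau are the elements of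
  type 'b, with arity ar; f s xs interprets symbol s on an argument list xs of length ar s.
  q n x ys is q_n(x, y_1, ..., y_n) with ys = [y_1,...,y_n] (length n);
  e i is the nullary constant e_i (only i >= 1 is meaningful).\<close>

definition clone_algebra ::
  "'a set \<Rightarrow> ('b \<Rightarrow> nat) \<Rightarrow> ('b \<Rightarrow> 'a list \<Rightarrow> 'a) \<Rightarrow> (nat \<Rightarrow> 'a \<Rightarrow> 'a list \<Rightarrow> 'a) \<Rightarrow> (nat \<Rightarrow> 'a) \<Rightarrow> bool"
where
  "clone_algebra C ar f q e \<longleftrightarrow>
     (\<forall>i\<ge>1. e i \<in> C) \<and>
     (\<forall>s xs. set xs \<subseteq> C \<longrightarrow> length xs = ar s \<longrightarrow> f s xs \<in> C) \<and>
     (\<forall>n x ys. x \<in> C \<longrightarrow> set ys \<subseteq> C \<longrightarrow> length ys = n \<longrightarrow> q n x ys \<in> C) \<and>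
     \<comment> \<open>(C1)\<close>
     (\<forall>n i xs. 1 \<le> i \<longrightarrow> i \<le> n \<longrightarrow> set xs \<subseteq> C \<longrightarrow> length xs = n \<longrightarrow>
        q n (e i) xs = xs ! (i - 1)) \<and>
     \<comment> \<open>(C2)\<close>
     (\<forall>n j xs. j > n \<longrightarrow> set xs \<subseteq> C \<longrightarrow> length xs = n \<longrightarrow> q n (e j) xs = e j) \<and>
     \<comment> \<open>(C3)\<close>
     (\<forall>n x. x \<in> C \<longrightarrow> q n x (map e [1..<Suc n]) = x) \<and>
     \<comment> \<open>(C4)\<close>
     (\<forall>n k x ys. n > k \<longrightarrow> x \<in> C \<longrightarrow> set ys \<subseteq> C \<longrightarrow> length ys = k \<longrightarrow>
        q k x ys = q n x (ys @ map e [Suc k..<Suc n])) \<and>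
     \<comment> \<open>(C5)\<close>
     (\<forall>n x ys zs. x \<in> C \<longrightarrow> set ys \<subseteq> C \<longrightarrow> set zs \<subseteq> C \<longrightarrow> length ys = n \<longrightarrow> length zs = n \<longrightarrow>
        q n (q n x ys) zs = q n x (map (\<lambda>y. q n y zs) ys)) \<and>
     \<comment> \<open>(C6)\<close>
     (\<forall>n s xs ys. set xs \<subseteq> C \<longrightarrow> set ys \<subseteq> C \<longrightarrow> length xs = ar s \<longrightarrow> length ys = n \<longrightarrow>
        q n (f s xs) ys = f s (map (\<lambda>x. q n x ys) xs))"

definition independent :: "(nat \<Rightarrow> 'a \<Rightarrow> 'a list \<Rightarrow> 'a) \<Rightarrow> (nat \<Rightarrow> 'a) \<Rightarrow> 'a \<Rightarrow> nat \<Rightarrow> bool" where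
  "independent q e a n \<longleftrightarrow> q n a (map e [1..<n] @ [e (Suc n)]) = a"

definition dep_set :: "(nat \<Rightarrow> 'a \<Rightarrow> 'a list \<Rightarrow> 'a) \<Rightarrow> (nat \<Rightarrow> 'a) \<Rightarrow> 'a \<Rightarrow> nat set" where
  "dep_set q e a = {i. 1 \<le> i \<and> \<not> independent q e a i}"

definition gamma :: "(nat \<Rightarrow> 'a \<Rightarrow> 'a list \<Rightarrow> 'a) \<Rightarrow> (nat \<Rightarrow> 'a) \<Rightarrow> 'a \<Rightarrow> enat" where
  "gamma q e a = (if infinite (dep_set q e a) then \<infinity>
                  else if dep_set q e a = {} then 0 else enat (Max (dep_set q e a)))"

definition Fi_k :: "'a set \<Rightarrow> (nat \<Rightarrow> 'a \<Rightarrow> 'a list \<Rightarrow> 'a) \<Rightarrow> (nat \<Rightarrow> 'a) \<Rightarrow> nat \<Rightarrow> 'a set" where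
  "Fi_k C q e k = {a \<in> C. gamma q e a \<le> enat k}"

definition Fi :: "'a set \<Rightarrow> (nat \<Rightarrow> 'a \<Rightarrow> 'a list \<Rightarrow> 'a) \<Rightarrow> (nat \<Rightarrow> 'a) \<Rightarrow> 'a set" where
  "Fi C q e = (\<Union>k. Fi_k C q e k)"

definition tau_subuniverse :: "'a set \<Rightarrow> ('b \<Rightarrow> nat) \<Rightarrow> ('b \<Rightarrow> 'a list \<Rightarrow> 'a) \<Rightarrow> 'a set \<Rightarrow> bool" where
  "tau_subuniverse C ar f S \<longleftrightarrow> S \<subseteq> C \<and>
     (\<forall>s xs. set xs \<subseteq> S \<longrightarrow> length xs = ar s \<longrightarrow> f s xs \<in> S)"

definition q_closed :: "(nat \<Rightarrow> 'a \<Rightarrow> 'a list \<Rightarrow> 'a) \<Rightarrow> 'a set \<Rightarrow> bool" where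
  "q_closed q S \<longleftrightarrow> (\<forall>n x ys. x \<in> S \<longrightarrow> set ys \<subseteq> S \<longrightarrow> length ys = n \<longrightarrow> q n x ys \<in> S)"

definition subalgebra ::
  "'a set \<Rightarrow> ('b \<Rightarrow> nat) \<Rightarrow> ('b \<Rightarrow> 'a list \<Rightarrow> 'a) \<Rightarrow> (nat \<Rightarrow> 'a \<Rightarrow> 'a list \<Rightarrow> 'a) \<Rightarrow> (nat \<Rightarrow> 'a) \<Rightarrow> 'a set \<Rightarrow> bool"
where
  "subalgebra C ar f q e S \<longleftrightarrow> tau_subuniverse C ar f S \<and> q_closed q S \<and> (\<forall>i\<ge>1. e i \<in> S)"

end

theory Submission
  imports Defs
begin

text \<open>If a is independent of every e_i with i > k, then substituting into a through q_n
  (n \<ge> k) only sees the first k arguments: by (C5), substituting into the identity that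
  expresses independence of e_(n+1) shows that the last argument is irrelevant, and (C4) then
  drops it. Consequently, if \<gamma>(a) \<le> n, the term q_n(a, b_1, ..., b_n) is independent of
  every e_i of which all the b_j are independent; padding with e's via (C4) reduces closure of
  Fi_k under arbitrary q_n to this case, (C6) gives closure under the basic operations, and
  Fi, being an increasing union of the Fi_k, inherits all closure properties.\<close>

lemma finite_subset_UN_mono:
  fixes S :: "nat \<Rightarrow> 'a set"
  assumes "mono S" "finite A" "A \<subseteq> (\<Union>k. S k)"
  obtains k where "A \<subseteq> S k"
proof -
  have "S i \<subseteq> S j \<or> S j \<subseteq> S i" for i j
    using nat_le_linear[of i j] monoD[OF assms(1)] by blast
  then have "subset.chain UNIV (range S)"
    by (auto simp: subset.chain_def)
  then show thesis
    using finite_subset_Union_chain[OF assms(2,3)] that by blast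
qed

lemma tau_subuniverse_UN_mono:
  fixes S :: "nat \<Rightarrow> 'a set"
  assumes "mono S" "\<And>k. tau_subuniverse C ar f (S k)"
  shows "tau_subuniverse C ar f (\<Union>k. S k)"
  unfolding tau_subuniverse_def
proof (intro conjI allI impI)
  show "(\<Union>k. S k) \<subseteq> C"
    using assms(2) by (auto simp: tau_subuniverse_def)
  fix s xs
  assume "set xs \<subseteq> (\<Union>k. S k)" "length xs = ar s"
  moreover obtain k where "set xs \<subseteq> S k"
    using finite_subset_UN_mono[OF assms(1) _ \<open>set xs \<subseteq> (\<Union>k. S k)\<close>] by blast
  ultimately have "f s xs \<in> S k"
    using assms(2)[of k] by (simp add: tau_subuniverse_def)
  then show "f s xs \<in> (\<Union>k. S k)" by blast
qed

lemma q_closed_UN_mono: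
  fixes S :: "nat \<Rightarrow> 'a set"
  assumes "mono S" "\<And>k. q_closed q (S k)"
  shows "q_closed q (\<Union>k. S k)"
  unfolding q_closed_def
proof (intro allI impI)
  fix n x ys
  assume "x \<in> (\<Union>k. S k)" "set ys \<subseteq> (\<Union>k. S k)" "length ys = n"
  moreover obtain k where "set (x # ys) \<subseteq> S k"
    using finite_subset_UN_mono[OF assms(1), of "set (x # ys)"] calculation by auto
  ultimately have "q n x ys \<in> S k"
    using assms(2)[of k] by (simp add: q_closed_def)
  then show "q n x ys \<in> (\<Union>k. S k)" by blast
qed

lemma gamma_le_enat_iff: "gamma q e a \<le> enat k \<longleftrightarrow> (\<forall>i>k. independent q e a i)"
proof -
  have "gamma q e a \<le> enat k \<longleftrightarrow> dep_set q e a \<subseteq> {..k}"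
    using finite_subset[of "dep_set q e a" "{..k}"] by (auto simp: gamma_def Max_le_iff)
  also have "\<dots> \<longleftrightarrow> (\<forall>i>k. independent q e a i)"
    unfolding dep_set_def
    by (auto simp: subset_eq) (metis Suc_leI le0 le_less_trans not_le, meson not_le)
  finally show ?thesis .
qed

lemma mem_Fi_k_iff: "a \<in> Fi_k C q e k \<longleftrightarrow> a \<in> C \<and> (\<forall>i>k. independent q e a i)"
  by (simp add: Fi_k_def gamma_le_enat_iff)

lemma mono_Fi_k: "mono (Fi_k C q e)"
  by (auto intro: monoI simp: mem_Fi_k_iff)

lemma Fi_k_subset: "Fi_k C q e k \<subseteq> C"
  by (simp add: Fi_k_def)

lemma Fi_subset: "Fi C q e \<subseteq> C"
  by (auto simp: Fi_def Fi_k_def)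

locale clone_tau_algebra =
  fixes C :: "'a set" and ar :: "'b \<Rightarrow> nat" and f :: "'b \<Rightarrow> 'a list \<Rightarrow> 'a"
    and q :: "nat \<Rightarrow> 'a \<Rightarrow> 'a list \<Rightarrow> 'a" and e :: "nat \<Rightarrow> 'a"
  assumes clone: "clone_algebra C ar f q e"
begin

lemma e_in_C: "1 \<le> i \<Longrightarrow> e i \<in> C"
  and f_in_C: "set xs \<subseteq> C \<Longrightarrow> length xs = ar s \<Longrightarrow> f s xs \<in> C"
  and q_in_C: "x \<in> C \<Longrightarrow> set ys \<subseteq> C \<Longrightarrow> length ys = n \<Longrightarrow> q n x ys \<in> C"
  using clone by (simp_all add: clone_algebra_def)

lemma C1:
  "1 \<le> i \<Longrightarrow> i \<le> n \<Longrightarrow> set xs \<subseteq> C \<Longrightarrow> length xs = n \<Longrightarrow> q n (e i) xs = xs ! (i - 1)"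
  using clone by (simp add: clone_algebra_def)

lemma C2: "n < j \<Longrightarrow> set xs \<subseteq> C \<Longrightarrow> length xs = n \<Longrightarrow> q n (e j) xs = e j"
  using clone by (auto simp: clone_algebra_def)

lemma C3: "x \<in> C \<Longrightarrow> q n x (map e [1..<Suc n]) = x"
  using clone by (simp add: clone_algebra_def del: upt_Suc)

lemma C4:
  "k < n \<Longrightarrow> x \<in> C \<Longrightarrow> set ys \<subseteq> C \<Longrightarrow> length ys = k \<Longrightarrow>
   q k x ys = q n x (ys @ map e [Suc k..<Suc n])"
  using clone by (simp add: clone_algebra_def del: upt_Suc)

lemma C5:
  "x \<in> C \<Longrightarrow> set ys \<subseteq> C \<Longrightarrow> set zs \<subseteq> C \<Longrightarrow> length ys = n \<Longrightarrow> length zs = n \<Longrightarrow>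
   q n (q n x ys) zs = q n x (map (\<lambda>y. q n y zs) ys)"
  using clone by (simp add: clone_algebra_def)

lemma C6:
  "set xs \<subseteq> C \<Longrightarrow> set ys \<subseteq> C \<Longrightarrow> length xs = ar s \<Longrightarrow> length ys = n \<Longrightarrow>
   q n (f s xs) ys = f s (map (\<lambda>x. q n x ys) xs)"
  using clone by (simp add: clone_algebra_def)

lemma C4_le:
  "k \<le> n \<Longrightarrow> x \<in> C \<Longrightarrow> set ys \<subseteq> C \<Longrightarrow> length ys = k \<Longrightarrow>
   q k x ys = q n x (ys @ map e [Suc k..<Suc n])"
  using C4[of k n x ys] by (cases "k = n") auto

lemma set_map_e_subset: "1 \<le> i \<Longrightarrow> set (map e [i..<j]) \<subseteq> C"
  using e_in_C by auto

lemma map_q_e_eq_take: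
  assumes "set xs \<subseteq> C" "length xs = n" "m \<le> n"
  shows "map (\<lambda>z. q n z xs) (map e [1..<Suc m]) = take m xs"
proof (rule nth_equalityI)
  show "length (map (\<lambda>z. q n z xs) (map e [1..<Suc m])) = length (take m xs)"
    using assms by simp
  fix j
  assume "j < length (map (\<lambda>z. q n z xs) (map e [1..<Suc m]))"
  then have "j < m"
    by (simp del: upt_Suc)
  then show "map (\<lambda>z. q n z xs) (map e [1..<Suc m]) ! j = take m xs ! j"
    using C1[of "Suc j" n xs] assms by (simp add: nth_upt del: upt_Suc)
qed

lemma q_snoc_eq_if_independent:
  assumes a: "a \<in> C" "independent q e a (Suc n)"
    and zs: "set zs \<subseteq> C" "length zs = n" and y: "y \<in> C"
  shows "q (Suc n) a (zs @ [y]) = q n a zs"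
proof -
  let ?ws = "map e [1..<Suc n] @ [e (Suc (Suc n))]"
  \<comment> \<open>Substituting into a = q_(n+1)(a, ?ws) replaces the last argument w by e_(n+2).\<close>
  have last_irrelevant: "q (Suc n) a (zs @ [w]) = q (Suc n) a (zs @ [e (Suc (Suc n))])"
    if "w \<in> C" for w
  proof -
    have wC: "set (zs @ [w]) \<subseteq> C" "length (zs @ [w]) = Suc n"
      using zs that by auto
    have "q (Suc n) a (zs @ [w]) = q (Suc n) (q (Suc n) a ?ws) (zs @ [w])"
      using a(2) by (simp add: independent_def del: upt_Suc)
    also have "\<dots> = q (Suc n) a (map (\<lambda>z. q (Suc n) z (zs @ [w])) ?ws)"
      using C5[OF a(1) _ wC(1)] set_map_e_subset e_in_C wC(2) by (simp del: upt_Suc)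
    also have "map (\<lambda>z. q (Suc n) z (zs @ [w])) ?ws = zs @ [e (Suc (Suc n))]"
      using map_q_e_eq_take[OF wC, of n] C2[of "Suc n" "Suc (Suc n)"] wC zs by simp
    finally show ?thesis .
  qed
  have "q (Suc n) a (zs @ [y]) = q (Suc n) a (zs @ [e (Suc n)])"
    using last_irrelevant[of y] last_irrelevant[of "e (Suc n)"] y e_in_C by simp
  also have "\<dots> = q n a zs"
    using C4[of n "Suc n" a zs] a zs by simp
  finally show ?thesis .
qed

lemma q_eq_q_take_if_independent:
  assumes a: "a \<in> C" "\<forall>i>k. independent q e a i"
  shows "k \<le> n \<Longrightarrow> set ys \<subseteq> C \<Longrightarrow> length ys = n \<Longrightarrow> q n a ys = q k a (take k ys)"
proof (induction n arbitrary: ys)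
  case 0
  then show ?case by simp
next
  case (Suc n)
  show ?case
  proof (cases "k = Suc n")
    case True
    with Suc.prems show ?thesis by simp
  next
    case False
    with Suc.prems have "k \<le> n" by simp
    from Suc.prems obtain zs y where ys: "ys = zs @ [y]"
      by (metis length_Suc_conv_rev)
    with Suc.prems have zs: "set zs \<subseteq> C" "length zs = n" "y \<in> C" by auto
    have "q (Suc n) a ys = q n a zs"
      using q_snoc_eq_if_independent[OF a(1) _ zs] a(2) \<open>k \<le> n\<close> ys by simp
    also have "\<dots> = q k a (take k zs)"
      using Suc.IH[OF \<open>k \<le> n\<close> zs(1,2)] .
    finally show ?thesis
      using ys zs \<open>k \<le> n\<close> by simp
  qed
qed

lemma q_eq_self_if_Fi_k_0:
  assumes "a \<in> Fi_k C q e 0" "set bs \<subseteq> C" "length bs = n"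
  shows "q n a bs = a"
proof -
  have "a \<in> C" "\<forall>i>0. independent q e a i"
    using assms(1) by (auto simp: mem_Fi_k_iff)
  then have "q n a bs = q 0 a []"
    using q_eq_q_take_if_independent[of a 0 n bs] assms(2,3) by simp
  also have "\<dots> = a"
    using C3[OF \<open>a \<in> C\<close>, of 0] by simp
  finally show ?thesis .
qed

lemma independent_q:
  assumes x: "x \<in> C" "\<forall>j>n. independent q e x j"
    and ys: "set ys \<subseteq> C" "length ys = n" "\<forall>y\<in>set ys. independent q e y i"
    and i: "1 \<le> i"
  shows "independent q e (q n x ys) i"
proof -
  \<comment> \<open>Pad both argument lists to a common length M by (C4); then (C5) distributes the
    substitution of ws' over ys', it fixes each y, and x ignores the padding of ys.\<close>
  define M where "M = max n i"
  define ws where "ws = map e [1..<i] @ [e (Suc i)]"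
  define ys' where "ys' = ys @ map e [Suc n..<Suc M]"
  define ws' where "ws' = ws @ map e [Suc i..<Suc M]"
  have nM: "n \<le> M" and iM: "i \<le> M"
    by (simp_all add: M_def)
  have ws: "set ws \<subseteq> C" "length ws = i"
    using set_map_e_subset e_in_C i by (auto simp: ws_def)
  have ys': "set ys' \<subseteq> C" "length ys' = M"
    using ys nM set_map_e_subset[of "Suc n" "Suc M"] by (auto simp: ys'_def simp del: upt_Suc)
  have ws': "set ws' \<subseteq> C" "length ws' = M"
    using ws iM set_map_e_subset[of "Suc i" "Suc M"] by (auto simp: ws'_def simp del: upt_Suc)
  have ys_fixed: "map (\<lambda>z. q M z ws') ys = ys"
  proof (rule map_idI)
    fix y
    assume "y \<in> set ys"
    then have "q M y ws' = q i y ws"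
      using C4_le[OF iM _ ws] ys(1) by (auto simp: ws'_def)
    also have "\<dots> = y"
      using ys(3) \<open>y \<in> set ys\<close> by (simp add: independent_def ws_def)
    finally show "q M y ws' = y" .
  qed
  have qC: "q n x ys \<in> C"
    using q_in_C x(1) ys by simp
  have "q i (q n x ys) ws = q M (q n x ys) ws'"
    unfolding ws'_def by (rule C4_le[OF iM qC ws])
  also have "\<dots> = q M (q M x ys') ws'"
    unfolding ys'_def using C4_le[OF nM x(1) ys(1,2)] by simp
  also have "\<dots> = q M x (map (\<lambda>z. q M z ws') ys')"
    using C5[OF x(1) ys'(1) ws'(1)] ys'(2) ws'(2) by simp
  also have "\<dots> = q n x (take n (map (\<lambda>z. q M z ws') ys'))"
  proof -
    have "set (map (\<lambda>z. q M z ws') ys') \<subseteq> C"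
      using q_in_C ys' ws' by auto
    then show ?thesis
      using q_eq_q_take_if_independent[OF x nM] ys'(2) by simp
  qed
  also have "take n (map (\<lambda>z. q M z ws') ys') = ys"
    using ys_fixed ys(2) by (simp add: ys'_def)
  finally show ?thesis
    by (simp add: independent_def ws_def)
qed

lemma independent_e:
  assumes "1 \<le> j" "1 \<le> i" "j \<noteq> i"
  shows "independent q e (e j) i"
proof -
  let ?ws = "map e [1..<i] @ [e (Suc i)]"
  have ws: "set ?ws \<subseteq> C" "length ?ws = i"
    using set_map_e_subset e_in_C assms(2) by auto
  show ?thesis
  proof (cases "j < i")
    case True
    then have "q i (e j) ?ws = ?ws ! (j - 1)"
      using C1[OF assms(1) _ ws] by simp
    also have "\<dots> = e j"
      using True assms(1) by (simp add: nth_append less_diff_iff)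
    finally show ?thesis
      by (simp add: independent_def)
  next
    case False
    then show ?thesis
      using C2[OF _ ws] assms(3) by (simp add: independent_def)
  qed
qed

lemma independent_f:
  assumes xs: "set xs \<subseteq> C" "length xs = ar s" "\<forall>x\<in>set xs. independent q e x i"
    and i: "1 \<le> i"
  shows "independent q e (f s xs) i"
proof -
  let ?ws = "map e [1..<i] @ [e (Suc i)]"
  have ws: "set ?ws \<subseteq> C" "length ?ws = i"
    using set_map_e_subset e_in_C i by auto
  have "map (\<lambda>x. q i x ?ws) xs = xs"
    using xs(3) by (simp add: independent_def map_idI)
  then show ?thesis
    using C6[OF xs(1) ws(1) xs(2) ws(2)] by (simp add: independent_def)
qed

lemma e_in_Fi_k: "1 \<le> i \<Longrightarrow> i \<le> k \<Longrightarrow> e i \<in> Fi_k C q e k"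
  using e_in_C independent_e by (simp add: mem_Fi_k_iff)

lemma q_in_Fi_k:
  assumes "a \<in> C" "gamma q e a \<le> enat n" "set bs \<subseteq> Fi_k C q e k" "length bs = n"
  shows "q n a bs \<in> Fi_k C q e k"
  using assms q_in_C independent_q by (auto simp: mem_Fi_k_iff gamma_le_enat_iff subset_iff)

lemma q_closed_Fi_k: "q_closed q (Fi_k C q e k)"
  unfolding q_closed_def
proof (intro allI impI)
  fix n x ys
  assume x: "x \<in> Fi_k C q e k" and ys: "set ys \<subseteq> Fi_k C q e k" "length ys = n"
  define N where "N = max n k"
  have "x \<in> C" "gamma q e x \<le> enat N"
    using x by (auto simp: mem_Fi_k_iff gamma_le_enat_iff N_def)
  \<comment> \<open>The padding is nonempty only if n < k, and then consists of e_j with j \<le> k.\<close>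
  moreover have "set (ys @ map e [Suc n..<Suc N]) \<subseteq> Fi_k C q e k"
    using ys e_in_Fi_k by (auto simp: N_def)
  ultimately have "q N x (ys @ map e [Suc n..<Suc N]) \<in> Fi_k C q e k"
    using q_in_Fi_k ys(2) by (simp add: N_def)
  moreover have "q n x ys = q N x (ys @ map e [Suc n..<Suc N])"
    using C4_le[of n N x ys] \<open>x \<in> C\<close> ys(1,2) Fi_k_subset[of C q e k]
    by (simp add: N_def del: upt_Suc)
  ultimately show "q n x ys \<in> Fi_k C q e k"
    by simp
qed

lemma tau_subuniverse_Fi_k: "tau_subuniverse C ar f (Fi_k C q e k)"
  unfolding tau_subuniverse_def
proof (intro conjI allI impI)
  show "Fi_k C q e k \<subseteq> C"
    by (rule Fi_k_subset)
  fix s xs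
  assume xs: "set xs \<subseteq> Fi_k C q e k" "length xs = ar s"
  have "set xs \<subseteq> C"
    using xs(1) Fi_k_subset[of C q e k] by (rule order_trans)
  moreover have "independent q e (f s xs) i" if "k < i" for i
  proof (rule independent_f[OF \<open>set xs \<subseteq> C\<close> xs(2)])
    show "\<forall>x\<in>set xs. independent q e x i"
      using xs(1) that by (auto simp: mem_Fi_k_iff)
  qed (use that in simp)
  ultimately show "f s xs \<in> Fi_k C q e k"
    using f_in_C xs(2) by (simp add: mem_Fi_k_iff)
qed

lemma subalgebra_Fi: "subalgebra C ar f q e (Fi C q e)"
proof -
  have "e i \<in> Fi C q e" if "1 \<le> i" for i
    using e_in_Fi_k[OF that order_refl] by (auto simp: Fi_def)
  then show ?thesis
    unfolding subalgebra_def Fi_def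
    using tau_subuniverse_UN_mono[OF mono_Fi_k tau_subuniverse_Fi_k]
      q_closed_UN_mono[OF mono_Fi_k q_closed_Fi_k]
    by simp
qed

end

theorem proposition4p9:
  fixes C :: "'a set" and ar :: "'b \<Rightarrow> nat" and f :: "'b \<Rightarrow> 'a list \<Rightarrow> 'a"
    and q :: "nat \<Rightarrow> 'a \<Rightarrow> 'a list \<Rightarrow> 'a" and e :: "nat \<Rightarrow> 'a"
  assumes "clone_algebra C ar f q e"
  shows "subalgebra C ar f q e (Fi C q e)
    \<and> (\<forall>k. tau_subuniverse C ar f (Fi_k C q e k) \<and> q_closed q (Fi_k C q e k)
              \<and> (\<forall>i. 1 \<le> i \<and> i \<le> k \<longrightarrow> e i \<in> Fi_k C q e k))
    \<and> (\<forall>a n bs. a \<in> Fi_k C q e 0 \<longrightarrow> set bs \<subseteq> C \<longrightarrow> length bs = n \<longrightarrow> q n a bs = a)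
    \<and> (\<forall>a n bs. a \<in> Fi C q e \<longrightarrow> gamma q e a \<le> enat n \<longrightarrow> set bs \<subseteq> Fi_k C q e 0
              \<longrightarrow> length bs = n \<longrightarrow> q n a bs \<in> Fi_k C q e 0)"
proof -
  interpret clone_tau_algebra C ar f q e
    using assms by (rule clone_tau_algebra.intro)
  show ?thesis
  proof (intro conjI allI impI)
    fix k i :: nat
    assume "1 \<le> i \<and> i \<le> k"
    then show "e i \<in> Fi_k C q e k"
      by (simp add: e_in_Fi_k)
  next
    fix a n bs
    assume "a \<in> Fi_k C q e 0" "set bs \<subseteq> C" "length bs = n"
    then show "q n a bs = a"
      by (rule q_eq_self_if_Fi_k_0)
  next
    fix a n bs
    assume "a \<in> Fi C q e" "gamma q e a \<le> enat n" "set bs \<subseteq> Fi_k C q e 0" "length bs = n"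
    then show "q n a bs \<in> Fi_k C q e 0"
      using q_in_Fi_k[OF subsetD[OF Fi_subset]] by blast
  qed (rule subalgebra_Fi tau_subuniverse_Fi_k q_closed_Fi_k)+
qed

end
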